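(* Let $H_1, H_2$ be histories generated by KSFTM with $H_2$ a strict extension of $H_1$. Let $T_i$ be a transaction of $H_1$ and $T_j$ a transaction of $H_2$ that are incarnations of each other (i.e. $its_i = its_j$). If $wts_i < wts_j$, then $cts_i < cts_j$.
   Context: In the algorithm KSFTM, a transaction $T_i$ is given, in its begin operation, a current timestamp $cts_i$ (the value of a global atomic counter, which is then incremented) and an initial timestamp $its_i$ (equal to $cts_i$ for a first invocation, otherwise equal to the $its$ of the first incarnation, passed by the application when re-invoking an aborted transaction); its working timestamp is $wts_i = cts_i + C\,(cts_i - its_i)$ for a fixed constant $C>0$. These values never change afterwards. Two transactions with the same $its$ are incarnations of each other. A history $H'$ is a strict extension of $H$ if $H$ is a proper prefix of $H'$. *)

theory Defs
  imports Complex_Main "HOL-Library.Sublist"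
begin

text \<open>Abstract model of histories generated by KSFTM, keeping only what is
relevant for timestamps. An event is a begin operation of a transaction
(transaction id, cts, its), some other operation of a transaction, or an abort.\<close>

datatype event = Beg nat nat nat | Op nat | Abt nat

definition txns :: "event list \<Rightarrow> nat set" where
  "txns H = {t. \<exists>c i. Beg t c i \<in> set H}"

text \<open>ksftm H g: history H is generated by KSFTM, g is the current value of the
global atomic counter.\<close>
inductive ksftm :: "event list \<Rightarrow> nat \<Rightarrow> bool" where
  init: "ksftm [] 0"
| begin_first: "\<lbrakk>ksftm H g; t \<notin> txns H\<rbrakk> \<Longrightarrow> ksftm (H @ [Beg t g g]) (Suc g)"
| begin_retry: "\<lbrakk>ksftm H g; t \<notin> txns H; Beg t' c i \<in> set H; Abt t' \<in> set H\<rbrakk>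
                 \<Longrightarrow> ksftm (H @ [Beg t g i]) (Suc g)"
| oper: "\<lbrakk>ksftm H g; t \<in> txns H\<rbrakk> \<Longrightarrow> ksftm (H @ [Op t]) g"
| abort: "\<lbrakk>ksftm H g; t \<in> txns H\<rbrakk> \<Longrightarrow> ksftm (H @ [Abt t]) g"

definition generated :: "event list \<Rightarrow> bool" where
  "generated H \<longleftrightarrow> (\<exists>g. ksftm H g)"

definition cts :: "event list \<Rightarrow> nat \<Rightarrow> nat" where
  "cts H t = (THE c. \<exists>i. Beg t c i \<in> set H)"

definition its :: "event list \<Rightarrow> nat \<Rightarrow> nat" where
  "its H t = (THE i. \<exists>c. Beg t c i \<in> set H)"

definition wts :: "real \<Rightarrow> event list \<Rightarrow> nat \<Rightarrow> real" where
  "wts C H t = real (cts H t) + C * (real (cts H t) - real (its H t))"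

end

theory Submission
  imports Defs
begin

text \<open>For incarnations sharing the same \<open>its\<close>, the working timestamp
\<open>(1 + C) \<cdot> cts - C \<cdot> its\<close> is a strictly increasing function of \<open>cts\<close>,
so comparing working timestamps compares current timestamps.\<close>

lemma wts_less_iff_cts_less:
  assumes "C > -1" and "its H t = its H' t'"
  shows "wts C H t < wts C H' t' \<longleftrightarrow> cts H t < cts H' t'"
proof -
  have "wts C H t < wts C H' t' \<longleftrightarrow>
        (1 + C) * real (cts H t) < (1 + C) * real (cts H' t')"
    using assms(2) by (simp add: wts_def algebra_simps)
  also have "\<dots> \<longleftrightarrow> cts H t < cts H' t'"
    using assms(1) by (simp add: mult_less_cancel_left_pos)
  finally show ?thesis .
qed

theorem lemma7:
  fixes C :: real and H1 H2 :: "event list" and ti tj :: nat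
  assumes "C > 0"
    and "generated H1" and "generated H2"
    and "strict_prefix H1 H2"
    and "ti \<in> txns H1" and "tj \<in> txns H2"
    and "its H1 ti = its H2 tj"
    and "wts C H1 ti < wts C H2 tj"
  shows "cts H1 ti < cts H2 tj"
  using wts_less_iff_cts_less[of C H1 ti H2 tj] assms(1,7,8) by simp

end
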